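(* Let $m$ and $n$ be positive integers, let $(K,\partial_0,\dots,\partial_{m-1})$ be a field with $m$ commuting derivations, and let $L=K(a_h^{\xi}\colon(\xi,h)\lhd(\tau,\ell))$ be a field extension of $K$ generated by elements indexed by the initial segment of $(\mathbb{N}^m\times n,\unlhd)$ below $(\tau,\ell)$, where $(\tau,\ell)\in\mathbb{N}^m\times n$ or $(\tau,\ell)=\infty$. Suppose $L$, with these generators, meets the differential condition. Then: (1) each $\partial_i$ extends to a derivation $D_i$ from $K(a_h^{\xi}\colon(\xi+\varepsilon_i,h)\lhd(\tau,\ell))$ into $L$ such that $D_ia_k^{\sigma}=a_k^{\sigma+\varepsilon_i}$ whenever $(\sigma+\varepsilon_i,k)\lhd(\tau,\ell)$; (2) if $a_k^{\sigma}$ is a separable leader and $(\sigma+\varepsilon_i,k)\lhd(\tau,\ell)$, then $a_k^{\sigma+\varepsilon_i}\in K(a_h^{\xi}\colon(\xi,h)\lhd(\sigma+\varepsilon_i,k))$; in particular $a_k^{\sigma+\varepsilon_i}$ is a separable leader; (3) consequently, every generator $a_k^{\rho}$ of $L/K$ that is above a separable leader $a_k^{\sigma}$ (i.e. $\sigma\le\rho$) is itself a separable leader.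
   Context: $n$ denotes also the set $\{0,\dots,n-1\}$. For $\sigma\in\mathbb{N}^m$ write $|\sigma|=\sum_{i<m}\sigma(i)$, and let $\le$ be the componentwise (product) order on $\mathbb{N}^m$. For $i<m$, $\varepsilon_i\in\mathbb{N}^m$ is the characteristic function of $\{i\}$; addition/subtraction on $\mathbb{N}^m$ is componentwise. The total order $\unlhd$ on $\mathbb{N}^m\times n$ is defined by $(\xi,k)\unlhd(\eta,g)$ iff $(|\xi|,k,\xi(0),\dots,\xi(m-2))$ is lexicographically $\le(|\eta|,g,\eta(0),\dots,\eta(m-2))$; $\lhd$ is its strict version, and $(\sigma,k)\lhd\infty$ for all $(\sigma,k)$. For $L=K(a_h^{\xi}\colon(\xi,h)\lhd(\tau,\ell))$: $a_k^\sigma$ is below $a_k^\rho$ (and $a_k^\rho$ above $a_k^\sigma$) if $\sigma\le\rho$. $L$ meets the differential condition if: whenever $i<m$, $(\sigma+\varepsilon_i,k)\lhd(\tau,\ell)$, and $f$ is a polynomial over $K$ in variables $(x_h^{\xi}\colon(\xi,h)\unlhd(\sigma,k))$ with $f(a_h^{\xi}\colon(\xi,h)\unlhd(\sigma,k))=0$, then $\sum_{(\eta,g)\unlhd(\sigma,k)}\frac{\partial f}{\partial x_g^{\eta}}(a)\cdot a_g^{\eta+\varepsilon_i}+f^{\partial_i}(a)=0$, where $a=(a_h^{\xi}\colon(\xi,h)\unlhd(\sigma,k))$ and $f^{\partial_i}$ is obtained from $f$ by applying $\partial_i$ to its coefficients. A generator $a_k^{\sigma}$ is a leader if it is algebraic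 over $K(a_h^{\xi}\colon(\xi,h)\lhd(\sigma,k))$, and a separable leader if it is separably algebraic over that field. *)

theory Defs
  imports "HOL-Computational_Algebra.Computational_Algebra"
begin

text \<open>Indices: elements of N^m x n, with N^m rendered as functions nat => nat
  vanishing outside {..<m}.  An index is a pair (xi, k).\<close>

type_synonym idx = "(nat \<Rightarrow> nat) \<times> nat"

definition indices :: "nat \<Rightarrow> nat \<Rightarrow> idx set" where
  "indices m n = {(\<xi>, k). (\<forall>i\<ge>m. \<xi> i = 0) \<and> k < n}"

definition add_eps :: "(nat \<Rightarrow> nat) \<Rightarrow> nat \<Rightarrow> (nat \<Rightarrow> nat)" where
  "add_eps \<sigma> i = (\<lambda>j. if j = i then \<sigma> j + 1 else \<sigma> j)"

definition idx_key :: "nat \<Rightarrow> idx \<Rightarrow> nat list" where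
  "idx_key m p = (sum (fst p) {..<m}) # snd p # map (fst p) [0..<m - 1]"

definition idx_lt :: "nat \<Rightarrow> idx \<Rightarrow> idx \<Rightarrow> bool" where
  "idx_lt m p q \<longleftrightarrow> (idx_key m p, idx_key m q) \<in> lexord {(x, y). x < y}"

definition idx_le :: "nat \<Rightarrow> idx \<Rightarrow> idx \<Rightarrow> bool" where
  "idx_le m p q \<longleftrightarrow> idx_key m p = idx_key m q \<or> idx_lt m p q"

text \<open>Comparison with a bound that is either an index (Some q) or infinity (None).\<close>
definition idx_lt_bnd :: "nat \<Rightarrow> idx \<Rightarrow> idx option \<Rightarrow> bool" where
  "idx_lt_bnd m p b = (case b of None \<Rightarrow> True | Some q \<Rightarrow> idx_lt m p q)"

definition is_subfield :: "'a::field set \<Rightarrow> bool" where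
  "is_subfield F \<longleftrightarrow> 0 \<in> F \<and> 1 \<in> F \<and>
     (\<forall>x\<in>F. \<forall>y\<in>F. x + y \<in> F \<and> x - y \<in> F \<and> x * y \<in> F) \<and>
     (\<forall>x\<in>F. inverse x \<in> F)"

definition field_gen :: "'a::field set \<Rightarrow> 'a set \<Rightarrow> 'a set" where
  "field_gen K S = \<Inter> {F. is_subfield F \<and> K \<subseteq> F \<and> S \<subseteq> F}"

definition is_derivation :: "'a::field set \<Rightarrow> 'a set \<Rightarrow> ('a \<Rightarrow> 'a) \<Rightarrow> bool" where
  "is_derivation F L D \<longleftrightarrow> (\<forall>x\<in>F. D x \<in> L) \<and>
     (\<forall>x\<in>F. \<forall>y\<in>F. D (x + y) = D x + D y \<and> D (x * y) = x * D y + D x * y)"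

definition poly_over :: "'a::field set \<Rightarrow> 'a poly \<Rightarrow> bool" where
  "poly_over F p \<longleftrightarrow> (\<forall>i. coeff p i \<in> F)"

definition algebraic_over :: "'a::field set \<Rightarrow> 'a \<Rightarrow> bool" where
  "algebraic_over F x \<longleftrightarrow> (\<exists>p. p \<noteq> 0 \<and> poly_over F p \<and> poly p x = 0)"

definition is_min_poly :: "'a::field set \<Rightarrow> 'a \<Rightarrow> 'a poly \<Rightarrow> bool" where
  "is_min_poly F x p \<longleftrightarrow> poly_over F p \<and> lead_coeff p = 1 \<and> poly p x = 0 \<and>
     (\<forall>q. q \<noteq> 0 \<and> poly_over F q \<and> poly q x = 0 \<longrightarrow> degree p \<le> degree q)"

definition separable_poly :: "'a::field poly \<Rightarrow> bool" where
  "separable_poly p \<longleftrightarrow> coprime p (pderiv p)"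

definition separably_algebraic_over :: "'a::field set \<Rightarrow> 'a \<Rightarrow> bool" where
  "separably_algebraic_over F x \<longleftrightarrow> (\<exists>p. is_min_poly F x p \<and> separable_poly p)"

text \<open>Multivariate polynomials over K in variables indexed by idx, written out as
  finitely supported coefficient functions on monomials (exponent functions).\<close>
type_synonym monom = "idx \<Rightarrow> nat"

definition mpoly_over :: "'a::field set \<Rightarrow> idx set \<Rightarrow> (monom \<Rightarrow> 'a) \<Rightarrow> bool" where
  "mpoly_over K V f \<longleftrightarrow> finite {M. f M \<noteq> 0} \<and> (\<forall>M. f M \<in> K) \<and>
     (\<forall>M. f M \<noteq> 0 \<longrightarrow> finite {v. M v \<noteq> 0} \<and> {v. M v \<noteq> 0} \<subseteq> V)"

definition mono_eval :: "monom \<Rightarrow> (idx \<Rightarrow> 'a::field) \<Rightarrow> 'a" where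
  "mono_eval M a = (\<Prod>v\<in>{v. M v \<noteq> 0}. a v ^ M v)"

definition mpoly_eval :: "(monom \<Rightarrow> 'a::field) \<Rightarrow> (idx \<Rightarrow> 'a) \<Rightarrow> 'a" where
  "mpoly_eval f a = (\<Sum>M\<in>{M. f M \<noteq> 0}. f M * mono_eval M a)"

definition mpoly_pderiv_eval :: "(monom \<Rightarrow> 'a::field) \<Rightarrow> idx \<Rightarrow> (idx \<Rightarrow> 'a) \<Rightarrow> 'a" where
  "mpoly_pderiv_eval f w a =
     (\<Sum>M\<in>{M. f M \<noteq> 0}. f M * of_nat (M w) * mono_eval (M(w := M w - 1)) a)"

definition mpoly_coeff_deriv_eval :: "('a \<Rightarrow> 'a) \<Rightarrow> (monom \<Rightarrow> 'a::field) \<Rightarrow> (idx \<Rightarrow> 'a) \<Rightarrow> 'a" where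
  "mpoly_coeff_deriv_eval d f a = (\<Sum>M\<in>{M. f M \<noteq> 0}. d (f M) * mono_eval M a)"

definition gen_below :: "nat \<Rightarrow> nat \<Rightarrow> 'a::field set \<Rightarrow> (idx \<Rightarrow> 'a) \<Rightarrow> idx option \<Rightarrow> 'a set" where
  "gen_below m n K a b = field_gen K (a ` {p \<in> indices m n. idx_lt_bnd m p b})"

definition separable_leader :: "nat \<Rightarrow> nat \<Rightarrow> 'a::field set \<Rightarrow> (idx \<Rightarrow> 'a) \<Rightarrow> idx \<Rightarrow> bool" where
  "separable_leader m n K a p \<longleftrightarrow> separably_algebraic_over (gen_below m n K a (Some p)) (a p)"

definition differential_condition ::
  "nat \<Rightarrow> nat \<Rightarrow> 'a::field set \<Rightarrow> (nat \<Rightarrow> 'a \<Rightarrow> 'a) \<Rightarrow> (idx \<Rightarrow> 'a) \<Rightarrow> idx option \<Rightarrow> bool" where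
  "differential_condition m n K d a b \<longleftrightarrow>
    (\<forall>i<m. \<forall>\<sigma> k f. (\<sigma>, k) \<in> indices m n \<and> idx_lt_bnd m (add_eps \<sigma> i, k) b \<and>
       mpoly_over K {p \<in> indices m n. idx_le m p (\<sigma>, k)} f \<and> mpoly_eval f a = 0 \<longrightarrow>
       (\<Sum>(\<eta>, g)\<in>{p \<in> indices m n. idx_le m p (\<sigma>, k)}.
           mpoly_pderiv_eval f (\<eta>, g) a * a (add_eps \<eta> i, g))
       + mpoly_coeff_deriv_eval (d i) f a = 0)"

end

theory Submission
  imports Defs
begin

text \<open>
  Every element of \<open>K(a(\<xi>, h) : (\<xi> + \<epsilon>\<^sub>i, h) \<lhd> (\<tau>, \<ell>))\<close> is a quotient \<open>P(a)/Q(a)\<close> of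
  polynomials over \<open>K\<close>. Differentiate it by the quotient rule, where a polynomial is differentiated
  by applying \<open>\<partial>\<^sub>i\<close> to its coefficients and sending each variable \<open>x(\<xi>, h)\<close> to \<open>a(\<xi> + \<epsilon>\<^sub>i, h)\<close>.
  Applied at the largest variable occurring in a polynomial relation among the generators, the
  differential condition says exactly that this formal derivative kills the relation; hence the
  quotient rule does not depend on the chosen representation, and it defines the derivation \<open>D\<^sub>i\<close>.

  If \<open>p\<close> is the separable minimal polynomial of \<open>a(\<sigma>, k)\<close> over \<open>F = K(a(\<xi>, h) : (\<xi>, h) \<lhd> (\<sigma>, k))\<close>,
  then \<open>0 = D\<^sub>i(p(a(\<sigma>, k))) = p\<^sup>D(a(\<sigma>, k)) + p'(a(\<sigma>, k)) a(\<sigma> + \<epsilon>\<^sub>i, k)\<close>. Since \<open>D\<^sub>i\<close> shifts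
  generators below \<open>(\<sigma>, k)\<close> to generators below \<open>(\<sigma> + \<epsilon>\<^sub>i, k)\<close>, the value \<open>p\<^sup>D(a(\<sigma>, k))\<close> lies in
  \<open>G = K(a(\<xi>, h) : (\<xi>, h) \<lhd> (\<sigma> + \<epsilon>\<^sub>i, k))\<close>; as \<open>p'(a(\<sigma>, k)) \<noteq> 0\<close> by separability,
  \<open>a(\<sigma> + \<epsilon>\<^sub>i, k) \<in> G\<close>. Iterating along unit steps from \<open>\<sigma>\<close> to \<open>\<rho>\<close> gives (3).
\<close>

section \<open>The ranking of indices\<close>

lemma idx_lt_trans: "idx_lt m p q \<Longrightarrow> idx_lt m q r \<Longrightarrow> idx_lt m p r"
proof -
  have "trans {(x::nat, y). x < y}" by (auto simp: trans_def)
  then show "idx_lt m p q \<Longrightarrow> idx_lt m q r \<Longrightarrow> idx_lt m p r"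
    unfolding idx_lt_def using lexord_trans by blast
qed

lemma idx_lt_bnd_trans: "idx_lt m p q \<Longrightarrow> idx_lt_bnd m q b \<Longrightarrow> idx_lt_bnd m p b"
  by (cases b) (auto simp: idx_lt_bnd_def intro: idx_lt_trans)

lemma idx_le_lt_trans: "idx_le m p q \<Longrightarrow> idx_lt m q r \<Longrightarrow> idx_lt m p r"
  unfolding idx_le_def by (auto simp: idx_lt_def intro: idx_lt_trans[unfolded idx_lt_def])

lemma idx_le_refl: "idx_le m p p"
  by (simp add: idx_le_def)

lemma idx_key_inj:
  assumes "m > 0" "p \<in> indices m n" "q \<in> indices m n" "idx_key m p = idx_key m q"
  shows "p = q"
proof -
  obtain \<xi> h \<eta> g where pq: "p = (\<xi>, h)" "q = (\<eta>, g)" by (cases p, cases q)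
  have vanish: "\<forall>i\<ge>m. \<xi> i = 0" "\<forall>i\<ge>m. \<eta> i = 0"
    using assms(2,3) pq by (auto simp: indices_def)
  from assms(4) pq have sums: "sum \<xi> {..<m} = sum \<eta> {..<m}" and "h = g"
    and "map \<xi> [0..<m-1] = map \<eta> [0..<m-1]" by (auto simp: idx_key_def)
  then have init: "\<forall>j<m-1. \<xi> j = \<eta> j" by (simp add: map_eq_conv)
  have "{..<m} = insert (m-1) {..<m-1}" using assms(1) by auto
  moreover have "sum \<xi> {..<m-1} = sum \<eta> {..<m-1}" using init by (intro sum.cong) auto
  ultimately have last: "\<xi> (m-1) = \<eta> (m-1)" using sums by simp
  have "\<xi> j = \<eta> j" for j
  proof -
    consider "j < m - 1" | "j = m - 1" | "j \<ge> m" using assms(1) by linarith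
    then show ?thesis
    proof cases
      case 1 then show ?thesis using init by blast
    next
      case 2 then show ?thesis using last by simp
    next
      case 3 then show ?thesis using vanish by simp
    qed
  qed
  then have "\<xi> = \<eta>" ..
  with \<open>h = g\<close> pq show ?thesis by simp
qed

lemma idx_lt_linear:
  assumes "m > 0" "p \<in> indices m n" "q \<in> indices m n"
  shows "idx_lt m p q \<or> p = q \<or> idx_lt m q p"
proof -
  have "\<forall>x y. (x, y) \<in> {(x::nat, y). x < y} \<or> x = y \<or> (y, x) \<in> {(x::nat, y). x < y}" by auto
  from lexord_linear[OF this, of "idx_key m p" "idx_key m q"] idx_key_inj[OF assms]
  show ?thesis unfolding idx_lt_def by auto
qed

lemma sum_add_eps: "i < m \<Longrightarrow> sum (add_eps \<sigma> i) {..<m} = sum \<sigma> {..<m} + 1"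
proof -
  assume "i < m"
  moreover have "add_eps \<sigma> i = (\<lambda>j. \<sigma> j + (if j = i then 1 else 0))"
    by (auto simp: add_eps_def)
  ultimately show ?thesis by (simp add: sum.distrib)
qed

lemma idx_lt_add_eps: "i < m \<Longrightarrow> idx_lt m (\<sigma>, k) (add_eps \<sigma> i, k)"
  by (simp add: idx_lt_def idx_key_def sum_add_eps)

lemma idx_lt_add_eps_mono:
  assumes "i < m" "idx_lt m (\<xi>, h) (\<sigma>, k)"
  shows "idx_lt m (add_eps \<xi> i, h) (add_eps \<sigma> i, k)"
proof -
  have lexord_map_upt:
    "(map f [0..<N], map g [0..<N]) \<in> lexord {(x::nat, y). x < y} \<longleftrightarrow>
     (\<exists>j<N. (\<forall>l<j. f l = g l) \<and> f j < g j)" for f g N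
    by (auto simp: lexord_take_index_conv take_map map_eq_conv)
  have "(map (add_eps \<xi> i) [0..<m-1], map (add_eps \<sigma> i) [0..<m-1]) \<in> lexord {(x, y). x < y}"
    if "(map \<xi> [0..<m-1], map \<sigma> [0..<m-1]) \<in> lexord {(x::nat, y). x < y}"
    using that unfolding lexord_map_upt by (auto simp: add_eps_def)
  with assms show ?thesis
    unfolding idx_lt_def idx_key_def by (auto simp: sum_add_eps)
qed

lemma add_eps_in_indices: "i < m \<Longrightarrow> (\<sigma>, k) \<in> indices m n \<Longrightarrow> (add_eps \<sigma> i, k) \<in> indices m n"
  by (auto simp: indices_def add_eps_def)

lemma finite_idx_le: "finite {p \<in> indices m n. idx_le m p (\<sigma>, k)}"
proof -
  let ?S = "sum \<sigma> {..<m}"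
  let ?F = "{\<xi>. \<forall>j. (j \<in> {..<m} \<longrightarrow> \<xi> j \<in> {..?S}) \<and> (j \<notin> {..<m} \<longrightarrow> \<xi> j = 0)}"
  have "finite ?F" by (rule finite_set_of_finite_funs) auto
  moreover have "{p \<in> indices m n. idx_le m p (\<sigma>, k)} \<subseteq> ?F \<times> {..<n}"
  proof clarify
    fix \<xi> h assume "(\<xi>, h) \<in> indices m n" and le: "idx_le m (\<xi>, h) (\<sigma>, k)"
    then have "\<forall>i\<ge>m. \<xi> i = 0" "h < n" by (auto simp: indices_def)
    moreover have "\<xi> j \<le> ?S" if "j < m" for j
    proof -
      have "\<xi> j \<le> sum \<xi> {..<m}" using that by (intro member_le_sum) auto
      also have "\<dots> \<le> ?S" using le by (auto simp: idx_le_def idx_lt_def idx_key_def)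
      finally show ?thesis .
    qed
    ultimately show "\<xi> \<in> ?F \<and> h \<in> {..<n}" by auto
  qed
  ultimately show ?thesis using finite_subset by blast
qed

lemma idx_max_exists:
  assumes "m > 0" "finite S" "S \<noteq> {}" "S \<subseteq> indices m n"
  shows "\<exists>q\<in>S. \<forall>p\<in>S. idx_le m p q"
  using assms(2,3,4)
proof (induction S rule: finite_ne_induct)
  case (singleton x) then show ?case by (simp add: idx_le_refl)
next
  case (insert x F)
  then obtain q where q: "q \<in> F" "\<forall>p\<in>F. idx_le m p q" by auto
  have x_idx: "x \<in> indices m n" and q_idx: "q \<in> indices m n" using insert.prems q by auto
  show ?case
  proof (cases "idx_lt m q x")
    case True
    then have "\<forall>p\<in>insert x F. idx_le m p x"
      using q(2) idx_le_lt_trans idx_le_refl unfolding idx_le_def[of m _ x] by blast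
    then show ?thesis by blast
  next
    case False
    then have "idx_le m x q"
      using idx_lt_linear[OF assms(1) x_idx q_idx] by (auto simp: idx_le_def)
    then show ?thesis using q by blast
  qed
qed

lemma subfield_0: "is_subfield F \<Longrightarrow> 0 \<in> F" by (simp add: is_subfield_def)
lemma subfield_1: "is_subfield F \<Longrightarrow> 1 \<in> F" by (simp add: is_subfield_def)
lemma subfield_add: "is_subfield F \<Longrightarrow> x \<in> F \<Longrightarrow> y \<in> F \<Longrightarrow> x + y \<in> F" by (simp add: is_subfield_def)
lemma subfield_diff: "is_subfield F \<Longrightarrow> x \<in> F \<Longrightarrow> y \<in> F \<Longrightarrow> x - y \<in> F" by (simp add: is_subfield_def)
lemma subfield_mult: "is_subfield F \<Longrightarrow> x \<in> F \<Longrightarrow> y \<in> F \<Longrightarrow> x * y \<in> F" by (simp add: is_subfield_def)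
lemma subfield_inverse: "is_subfield F \<Longrightarrow> x \<in> F \<Longrightarrow> inverse x \<in> F" by (simp add: is_subfield_def)

lemma subfield_uminus: "is_subfield F \<Longrightarrow> x \<in> F \<Longrightarrow> - x \<in> F"
  using subfield_diff[of F 0 x] subfield_0[of F] by simp

lemma subfield_divide: "is_subfield F \<Longrightarrow> x \<in> F \<Longrightarrow> y \<in> F \<Longrightarrow> x / y \<in> F"
  by (simp add: divide_inverse subfield_mult subfield_inverse)

lemma subfield_power: "is_subfield F \<Longrightarrow> x \<in> F \<Longrightarrow> x ^ k \<in> F"
  by (induction k) (auto intro: subfield_mult subfield_1)

lemma subfield_of_nat: "is_subfield F \<Longrightarrow> of_nat k \<in> F"
  by (induction k) (auto intro: subfield_add subfield_1 subfield_0)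

lemma subfield_sum_list:
  "is_subfield F \<Longrightarrow> (\<And>x. x \<in> set xs \<Longrightarrow> f x \<in> F) \<Longrightarrow> sum_list (map f xs) \<in> F"
  by (induction xs) (auto intro: subfield_add subfield_0)

lemma subfield_sum: "is_subfield F \<Longrightarrow> (\<And>x. x \<in> A \<Longrightarrow> f x \<in> F) \<Longrightarrow> sum f A \<in> F"
  by (induction A rule: infinite_finite_induct) (auto intro: subfield_add subfield_0)

lemma subfield_prod: "is_subfield F \<Longrightarrow> (\<And>x. x \<in> A \<Longrightarrow> f x \<in> F) \<Longrightarrow> prod f A \<in> F"
  by (induction A rule: infinite_finite_induct) (auto intro: subfield_mult subfield_1)

lemma field_gen_subfield: "is_subfield (field_gen K S)"
  unfolding field_gen_def is_subfield_def by auto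

lemma field_gen_least: "is_subfield F \<Longrightarrow> K \<subseteq> F \<Longrightarrow> S \<subseteq> F \<Longrightarrow> field_gen K S \<subseteq> F"
  unfolding field_gen_def by auto

lemma field_gen_base: "K \<subseteq> field_gen K S"
  unfolding field_gen_def by auto

lemma field_gen_gens: "S \<subseteq> field_gen K S"
  unfolding field_gen_def by auto

lemma field_gen_mono: "S \<subseteq> T \<Longrightarrow> field_gen K S \<subseteq> field_gen K T"
  unfolding field_gen_def by auto

lemma derivation_add: "is_derivation F L D \<Longrightarrow> x \<in> F \<Longrightarrow> y \<in> F \<Longrightarrow> D (x + y) = D x + D y"
  by (simp add: is_derivation_def)

lemma derivation_mult:
  "is_derivation F L D \<Longrightarrow> x \<in> F \<Longrightarrow> y \<in> F \<Longrightarrow> D (x * y) = x * D y + D x * y"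
  by (simp add: is_derivation_def)

lemma derivation_0:
  assumes "is_derivation F L D" "is_subfield F"
  shows "D 0 = 0"
proof -
  have "D 0 = D 0 + D 0"
    using derivation_add[OF assms(1) subfield_0[OF assms(2)] subfield_0[OF assms(2)]] by simp
  then show ?thesis by (simp only: add_cancel_right_right)
qed

lemma derivation_1:
  assumes "is_derivation F L D" "is_subfield F"
  shows "D 1 = 0"
proof -
  have "D 1 = D 1 + D 1"
    using derivation_mult[OF assms(1) subfield_1[OF assms(2)] subfield_1[OF assms(2)]] by simp
  then show ?thesis by (simp only: add_cancel_right_right)
qed

lemma derivation_diff:
  assumes "is_derivation F L D" "is_subfield F" "x \<in> F" "y \<in> F"
  shows "D (x - y) = D x - D y"
  using derivation_add[OF assms(1) subfield_diff[OF assms(2-4)] assms(4)] by simp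

lemma derivation_uminus: "is_derivation F L D \<Longrightarrow> is_subfield F \<Longrightarrow> x \<in> F \<Longrightarrow> D (- x) = - D x"
  using derivation_diff[of F L D 0 x] derivation_0[of F L D] subfield_0[of F] by simp

lemma derivation_inverse:
  assumes "is_derivation F L D" "is_subfield F" "x \<in> F" "x \<noteq> 0"
  shows "D (inverse x) = - D x * inverse x / x"
proof -
  have "0 = D (x * inverse x)" using assms(4) derivation_1[OF assms(1,2)] by simp
  also have "\<dots> = x * D (inverse x) + D x * inverse x"
    by (rule derivation_mult[OF assms(1,3) subfield_inverse[OF assms(2,3)]])
  finally have *: "x * D (inverse x) = - (D x * inverse x)" by (simp add: eq_neg_iff_add_eq_0)
  have "D (inverse x) = inverse x * (x * D (inverse x))" using assms(4) by simp
  also have "\<dots> = - D x * inverse x / x" unfolding * by (simp add: divide_inverse)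
  finally show ?thesis .
qed

lemma derivation_sum_list:
  "is_derivation F L D \<Longrightarrow> is_subfield F \<Longrightarrow> (\<And>x. x \<in> set xs \<Longrightarrow> f x \<in> F) \<Longrightarrow>
   D (sum_list (map f xs)) = sum_list (map (\<lambda>x. D (f x)) xs)"
  by (induction xs) (auto simp: derivation_0 derivation_add subfield_sum_list)

text \<open>The elements \<open>x \<in> F \<inter> G\<close> with \<open>D x \<in> G\<close> form a subfield.\<close>

lemma derivation_field_gen_into:
  assumes D: "is_derivation F L D" and F: "is_subfield F" and G: "is_subfield G"
    and gen: "field_gen K S \<subseteq> F" and "K \<subseteq> G" "S \<subseteq> G"
    and "\<forall>x\<in>K. D x \<in> G" "\<forall>x\<in>S. D x \<in> G"
  shows "\<forall>x\<in>field_gen K S. D x \<in> G"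
proof -
  define H where "H = {x \<in> F \<inter> G. D x \<in> G}"
  have "is_subfield H"
    unfolding is_subfield_def
  proof (intro conjI ballI)
    show "0 \<in> H" using derivation_0[OF D F] by (simp add: H_def subfield_0[OF F] subfield_0[OF G])
    show "1 \<in> H"
      using derivation_1[OF D F] by (simp add: H_def subfield_1[OF F] subfield_1[OF G] subfield_0[OF G])
    fix x y assume "x \<in> H" "y \<in> H"
    then have x: "x \<in> F" "x \<in> G" "D x \<in> G" and y: "y \<in> F" "y \<in> G" "D y \<in> G"
      by (simp_all add: H_def)
    show "x + y \<in> H"
      using x y by (simp add: H_def derivation_add[OF D x(1) y(1)] subfield_add[OF F] subfield_add[OF G])
    show "x - y \<in> H"
      using x y
      by (simp add: H_def derivation_diff[OF D F x(1) y(1)] subfield_diff[OF F] subfield_diff[OF G])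
    show "x * y \<in> H"
      using x y by (simp add: H_def derivation_mult[OF D x(1) y(1)] subfield_mult[OF F]
          subfield_mult[OF G] subfield_add[OF G])
  next
    fix x assume "x \<in> H"
    then have x: "x \<in> F" "x \<in> G" "D x \<in> G" by (simp_all add: H_def)
    show "inverse x \<in> H"
    proof (cases "x = 0")
      case True then show ?thesis using \<open>x \<in> H\<close> by simp
    next
      case False
      have "- D x * inverse x / x \<in> G"
        using x by (intro subfield_divide[OF G] subfield_mult[OF G] subfield_uminus[OF G]
            subfield_inverse[OF G])
      then show ?thesis
        using x by (simp add: H_def derivation_inverse[OF D F x(1) False] subfield_inverse[OF F]
            subfield_inverse[OF G])
    qed
  qed
  moreover have "K \<subseteq> H" "S \<subseteq> H"
    using assms(5-8) gen field_gen_base[of K S] field_gen_gens[of S K] unfolding H_def by blast+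
  ultimately have "field_gen K S \<subseteq> H" by (rule field_gen_least)
  then show ?thesis unfolding H_def by blast
qed

section \<open>Polynomials as lists of terms\<close>

text \<open>A polynomial over \<open>K\<close> is represented by an unnormalized list of terms \<open>(c, M)\<close> standing for
  \<open>c x\<^sup>M\<close>. Besides its value at \<open>a\<close>, we evaluate its total derivative at \<open>a\<close>: the derivation \<open>dd\<close>
  acts on coefficients and the variable \<open>x\<^sub>w\<close> has derivative \<open>e w\<close>.\<close>

type_synonym 'a lpoly = "('a \<times> monom) list"

definition lpoly_over :: "'a set \<Rightarrow> idx set \<Rightarrow> 'a lpoly \<Rightarrow> bool" where
  "lpoly_over K U P \<longleftrightarrow> (\<forall>(c, M)\<in>set P. c \<in> K \<and> finite {v. M v \<noteq> 0} \<and> {v. M v \<noteq> 0} \<subseteq> U)"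

definition lpoly_eval :: "(idx \<Rightarrow> 'a::field) \<Rightarrow> 'a lpoly \<Rightarrow> 'a" where
  "lpoly_eval a P = sum_list (map (\<lambda>(c, M). c * mono_eval M a) P)"

definition mono_deriv_eval :: "(idx \<Rightarrow> 'a::field) \<Rightarrow> (idx \<Rightarrow> 'a) \<Rightarrow> monom \<Rightarrow> 'a" where
  "mono_deriv_eval a e M =
     (\<Sum>w\<in>{v. M v \<noteq> 0}. of_nat (M w) * mono_eval (M(w := M w - 1)) a * e w)"

definition lpoly_deriv_eval ::
  "('a \<Rightarrow> 'a) \<Rightarrow> (idx \<Rightarrow> 'a::field) \<Rightarrow> (idx \<Rightarrow> 'a) \<Rightarrow> 'a lpoly \<Rightarrow> 'a" where
  "lpoly_deriv_eval dd a e P =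
     sum_list (map (\<lambda>(c, M). dd c * mono_eval M a + c * mono_deriv_eval a e M) P)"

fun lpoly_mult :: "'a::field lpoly \<Rightarrow> 'a lpoly \<Rightarrow> 'a lpoly" where
  "lpoly_mult [] Q = []"
| "lpoly_mult ((c, M) # P) Q = map (\<lambda>(c', M'). (c * c', \<lambda>v. M v + M' v)) Q @ lpoly_mult P Q"

definition lpoly_uminus :: "'a::field lpoly \<Rightarrow> 'a lpoly" where
  "lpoly_uminus P = map (\<lambda>(c, M). (- c, M)) P"

definition lpoly_const :: "'a::field \<Rightarrow> 'a lpoly" where
  "lpoly_const c = [(c, \<lambda>_. 0)]"

definition lpoly_var :: "idx \<Rightarrow> 'a::field lpoly" where
  "lpoly_var v = [(1, (\<lambda>_. 0)(v := 1))]"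

lemma lpoly_over_Nil [simp]: "lpoly_over K U []"
  by (simp add: lpoly_over_def)

lemma lpoly_over_Cons [simp]:
  "lpoly_over K U ((c, M) # P) \<longleftrightarrow>
     c \<in> K \<and> finite {v. M v \<noteq> 0} \<and> {v. M v \<noteq> 0} \<subseteq> U \<and> lpoly_over K U P"
  by (auto simp: lpoly_over_def)

lemma lpoly_over_append [simp]: "lpoly_over K U (P @ Q) \<longleftrightarrow> lpoly_over K U P \<and> lpoly_over K U Q"
  by (auto simp: lpoly_over_def)

lemma lpoly_overD:
  "lpoly_over K U P \<Longrightarrow> (c, M) \<in> set P \<Longrightarrow> c \<in> K \<and> finite {v. M v \<noteq> 0} \<and> {v. M v \<noteq> 0} \<subseteq> U"
  unfolding lpoly_over_def by fastforce

lemma lpoly_over_mono: "U \<subseteq> U' \<Longrightarrow> lpoly_over K U P \<Longrightarrow> lpoly_over K U' P"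
  unfolding lpoly_over_def by fast

lemma lpoly_eval_Nil [simp]: "lpoly_eval a [] = 0"
  by (simp add: lpoly_eval_def)

lemma lpoly_eval_Cons [simp]: "lpoly_eval a ((c, M) # P) = c * mono_eval M a + lpoly_eval a P"
  by (simp add: lpoly_eval_def)

lemma lpoly_eval_append [simp]: "lpoly_eval a (P @ Q) = lpoly_eval a P + lpoly_eval a Q"
  by (simp add: lpoly_eval_def)

lemma lpoly_deriv_eval_Nil [simp]: "lpoly_deriv_eval dd a e [] = 0"
  by (simp add: lpoly_deriv_eval_def)

lemma lpoly_deriv_eval_Cons [simp]:
  "lpoly_deriv_eval dd a e ((c, M) # P) =
     dd c * mono_eval M a + c * mono_deriv_eval a e M + lpoly_deriv_eval dd a e P"
  by (simp add: lpoly_deriv_eval_def)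

lemma lpoly_deriv_eval_append [simp]:
  "lpoly_deriv_eval dd a e (P @ Q) = lpoly_deriv_eval dd a e P + lpoly_deriv_eval dd a e Q"
  by (simp add: lpoly_deriv_eval_def)

lemma mono_eval_0 [simp]: "mono_eval (\<lambda>_. 0) a = 1"
  by (simp add: mono_eval_def)

lemma mono_deriv_eval_0 [simp]: "mono_deriv_eval a e (\<lambda>_. 0) = 0"
  by (simp add: mono_deriv_eval_def)

lemma mono_eval_superset:
  "finite S \<Longrightarrow> {v. M v \<noteq> 0} \<subseteq> S \<Longrightarrow> mono_eval M a = (\<Prod>v\<in>S. a v ^ M v)"
  unfolding mono_eval_def by (rule prod.mono_neutral_left) auto

lemma mono_deriv_eval_superset:
  "finite S \<Longrightarrow> {v. M v \<noteq> 0} \<subseteq> S \<Longrightarrow>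
   mono_deriv_eval a e M = (\<Sum>w\<in>S. of_nat (M w) * mono_eval (M(w := M w - 1)) a * e w)"
  unfolding mono_deriv_eval_def by (rule sum.mono_neutral_left) auto

lemma mono_eval_add:
  assumes "finite {v. M1 v \<noteq> 0}" "finite {v. M2 v \<noteq> 0}"
  shows "mono_eval (\<lambda>v. M1 v + M2 v) a = mono_eval M1 a * mono_eval M2 a"
proof -
  let ?S = "{v. M1 v \<noteq> 0} \<union> {v. M2 v \<noteq> 0}"
  have S: "finite ?S" using assms by simp
  have "mono_eval (\<lambda>v. M1 v + M2 v) a = (\<Prod>v\<in>?S. a v ^ (M1 v + M2 v))"
    by (rule mono_eval_superset[OF S]) auto
  also have "\<dots> = (\<Prod>v\<in>?S. a v ^ M1 v) * (\<Prod>v\<in>?S. a v ^ M2 v)"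
    by (simp add: power_add prod.distrib)
  also have "\<dots> = mono_eval M1 a * mono_eval M2 a"
    using mono_eval_superset[OF S, of M1 a] mono_eval_superset[OF S, of M2 a] by auto
  finally show ?thesis .
qed

lemma mono_deriv_eval_add:
  assumes fin1: "finite {v. M1 v \<noteq> 0}" and fin2: "finite {v. M2 v \<noteq> 0}"
  shows "mono_deriv_eval a e (\<lambda>v. M1 v + M2 v) =
           mono_eval M1 a * mono_deriv_eval a e M2 + mono_deriv_eval a e M1 * mono_eval M2 a"
proof -
  let ?S = "{v. M1 v \<noteq> 0} \<union> {v. M2 v \<noteq> 0}"
  let ?M = "\<lambda>v. M1 v + M2 v"
  let ?M1' = "\<lambda>w. M1(w := M1 w - 1)" and ?M2' = "\<lambda>w. M2(w := M2 w - 1)"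
  have S: "finite ?S" using assms by simp
  have left: "of_nat (M1 w) * mono_eval (?M(w := ?M w - 1)) a
          = of_nat (M1 w) * mono_eval (?M1' w) a * mono_eval M2 a" for w
  proof (cases "M1 w = 0")
    case False
    then have eq: "?M(w := ?M w - 1) = (\<lambda>v. ?M1' w v + M2 v)" by auto
    have "finite {v. ?M1' w v \<noteq> 0}" by (rule finite_subset[OF _ fin1]) auto
    then show ?thesis by (simp only: eq mono_eval_add[OF _ fin2] mult.assoc)
  qed simp
  have right: "of_nat (M2 w) * mono_eval (?M(w := ?M w - 1)) a
          = of_nat (M2 w) * mono_eval M1 a * mono_eval (?M2' w) a" for w
  proof (cases "M2 w = 0")
    case False
    then have eq: "?M(w := ?M w - 1) = (\<lambda>v. M1 v + ?M2' w v)" by auto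
    have "finite {v. ?M2' w v \<noteq> 0}" by (rule finite_subset[OF _ fin2]) auto
    then show ?thesis by (simp only: eq mono_eval_add[OF fin1] mult.assoc)
  qed simp
  have summand: "of_nat (?M w) * mono_eval (?M(w := ?M w - 1)) a * e w
      = mono_eval M1 a * (of_nat (M2 w) * mono_eval (?M2' w) a * e w)
        + of_nat (M1 w) * mono_eval (?M1' w) a * e w * mono_eval M2 a" for w
    unfolding of_nat_add distrib_right left right by (simp add: algebra_simps)
  have "mono_deriv_eval a e ?M = (\<Sum>w\<in>?S. of_nat (?M w) * mono_eval (?M(w := ?M w - 1)) a * e w)"
    by (rule mono_deriv_eval_superset[OF S]) auto
  also have "\<dots> = mono_eval M1 a * (\<Sum>w\<in>?S. of_nat (M2 w) * mono_eval (?M2' w) a * e w)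
      + (\<Sum>w\<in>?S. of_nat (M1 w) * mono_eval (?M1' w) a * e w) * mono_eval M2 a"
    unfolding sum_distrib_left sum_distrib_right sum.distrib[symmetric] summand ..
  also have "\<dots> = mono_eval M1 a * mono_deriv_eval a e M2 + mono_deriv_eval a e M1 * mono_eval M2 a"
    using mono_deriv_eval_superset[OF S, of M1 a e] mono_deriv_eval_superset[OF S, of M2 a e] by auto
  finally show ?thesis .
qed

lemma lpoly_eval_uminus [simp]: "lpoly_eval a (lpoly_uminus P) = - lpoly_eval a P"
  by (induction P) (auto simp: lpoly_uminus_def)

lemma lpoly_over_uminus: "is_subfield K \<Longrightarrow> lpoly_over K U P \<Longrightarrow> lpoly_over K U (lpoly_uminus P)"
  by (induction P) (auto simp: lpoly_uminus_def subfield_uminus)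

lemma lpoly_deriv_eval_uminus:
  assumes "is_derivation K L dd" "is_subfield K" "lpoly_over K U P"
  shows "lpoly_deriv_eval dd a e (lpoly_uminus P) = - lpoly_deriv_eval dd a e P"
  using assms(3) by (induction P) (auto simp: lpoly_uminus_def derivation_uminus[OF assms(1,2)])

lemma lpoly_over_mult:
  assumes K: "is_subfield K" and "lpoly_over K U P" "lpoly_over K U Q"
  shows "lpoly_over K U (lpoly_mult P Q)"
  using assms(2)
proof (induction P)
  case (Cons t P)
  obtain c M where t: "t = (c, M)" by (cases t)
  have "lpoly_over K U (map (\<lambda>(c', M'). (c * c', \<lambda>v. M v + M' v)) Q)"
    using assms(3)
  proof (induction Q)
    case (Cons t' Q)
    obtain c' M' where "t' = (c', M')" by (cases t')
    with Cons \<open>lpoly_over K U (t # P)\<close> t show ?case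
      by (auto simp: Collect_disj_eq intro: subfield_mult[OF K])
  qed simp
  with Cons t show ?case by simp
qed simp

lemma lpoly_eval_map_term_mult:
  assumes "lpoly_over K U Q" "finite {v. M v \<noteq> 0}"
  shows "lpoly_eval a (map (\<lambda>(c', M'). (c * c', \<lambda>v. M v + M' v)) Q) = c * mono_eval M a * lpoly_eval a Q"
  using assms(1)
proof (induction Q)
  case (Cons t Q)
  obtain c' M' where t: "t = (c', M')" by (cases t)
  with Cons.prems have "finite {v. M' v \<noteq> 0}" "lpoly_over K U Q" by auto
  with Cons.IH t show ?case by (simp add: mono_eval_add[OF assms(2)] algebra_simps)
qed simp

lemma lpoly_deriv_eval_map_term_mult:
  assumes dd: "is_derivation K L dd" and "lpoly_over K U Q" "finite {v. M v \<noteq> 0}" "c \<in> K"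
  shows "lpoly_deriv_eval dd a e (map (\<lambda>(c', M'). (c * c', \<lambda>v. M v + M' v)) Q)
           = c * mono_eval M a * lpoly_deriv_eval dd a e Q
             + (dd c * mono_eval M a + c * mono_deriv_eval a e M) * lpoly_eval a Q"
  using assms(2)
proof (induction Q)
  case (Cons t Q)
  obtain c' M' where t: "t = (c', M')" by (cases t)
  with Cons.prems have "finite {v. M' v \<noteq> 0}" "lpoly_over K U Q" "c' \<in> K" by auto
  with Cons.IH t show ?case
    by (simp add: mono_eval_add[OF assms(3)] mono_deriv_eval_add[OF assms(3)]
        derivation_mult[OF dd assms(4)] algebra_simps)
qed simp

lemma lpoly_eval_mult:
  assumes "lpoly_over K U P" "lpoly_over K U Q"
  shows "lpoly_eval a (lpoly_mult P Q) = lpoly_eval a P * lpoly_eval a Q"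
  using assms(1)
proof (induction P)
  case (Cons t P)
  obtain c M where t: "t = (c, M)" by (cases t)
  with Cons.prems have "finite {v. M v \<noteq> 0}" "lpoly_over K U P" by simp_all
  then have "lpoly_eval a (lpoly_mult (t # P) Q) = c * mono_eval M a * lpoly_eval a Q + lpoly_eval a P * lpoly_eval a Q"
    by (simp only: t lpoly_mult.simps lpoly_eval_append lpoly_eval_map_term_mult[OF assms(2)] Cons.IH)
  then show ?case by (simp add: t algebra_simps)
qed simp

lemma lpoly_deriv_eval_mult:
  assumes dd: "is_derivation K L dd" and "lpoly_over K U P" "lpoly_over K U Q"
  shows "lpoly_deriv_eval dd a e (lpoly_mult P Q) =
           lpoly_eval a P * lpoly_deriv_eval dd a e Q + lpoly_deriv_eval dd a e P * lpoly_eval a Q"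
  using assms(2)
proof (induction P)
  case (Cons t P)
  obtain c M where t: "t = (c, M)" by (cases t)
  with Cons.prems have "finite {v. M v \<noteq> 0}" "c \<in> K" "lpoly_over K U P" by simp_all
  then have "lpoly_deriv_eval dd a e (lpoly_mult (t # P) Q) =
      c * mono_eval M a * lpoly_deriv_eval dd a e Q
      + (dd c * mono_eval M a + c * mono_deriv_eval a e M) * lpoly_eval a Q
      + (lpoly_eval a P * lpoly_deriv_eval dd a e Q + lpoly_deriv_eval dd a e P * lpoly_eval a Q)"
    by (simp only: t lpoly_mult.simps lpoly_deriv_eval_append
        lpoly_deriv_eval_map_term_mult[OF dd assms(3)] Cons.IH)
  then show ?case by (simp add: t algebra_simps)
qed simp

lemma lpoly_eval_const [simp]: "lpoly_eval a (lpoly_const c) = c"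
  by (simp add: lpoly_const_def)

lemma lpoly_deriv_eval_const [simp]: "lpoly_deriv_eval dd a e (lpoly_const c) = dd c"
  by (simp add: lpoly_const_def)

lemma lpoly_over_const: "c \<in> K \<Longrightarrow> lpoly_over K U (lpoly_const c)"
  by (simp add: lpoly_const_def)

lemma support_single: "{w. ((\<lambda>_. 0)(v := (1::nat))) w \<noteq> 0} = {v}"
  by auto

lemma lpoly_eval_var [simp]: "lpoly_eval a (lpoly_var v) = a v"
  by (simp add: lpoly_var_def mono_eval_def support_single)

lemma lpoly_deriv_eval_var:
  "is_derivation K L dd \<Longrightarrow> is_subfield K \<Longrightarrow> lpoly_deriv_eval dd a e (lpoly_var v) = e v"
  by (simp add: lpoly_var_def mono_eval_def mono_deriv_eval_def support_single derivation_1)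

lemma lpoly_over_var: "is_subfield K \<Longrightarrow> v \<in> U \<Longrightarrow> lpoly_over K U (lpoly_var v)"
  by (simp add: lpoly_var_def support_single subfield_1)

lemma mono_eval_in:
  assumes "is_subfield F" "{v. M v \<noteq> 0} \<subseteq> U" "a ` U \<subseteq> F"
  shows "mono_eval M a \<in> F"
  unfolding mono_eval_def
proof (rule subfield_prod[OF assms(1)])
  fix v assume "v \<in> {v. M v \<noteq> 0}"
  then have "a v \<in> F" using assms(2,3) by blast
  then show "a v ^ M v \<in> F" by (rule subfield_power[OF assms(1)])
qed

lemma mono_deriv_eval_in:
  assumes "is_subfield F" "{v. M v \<noteq> 0} \<subseteq> U" "a ` U \<subseteq> F" "e ` U \<subseteq> F"
  shows "mono_deriv_eval a e M \<in> F"
  unfolding mono_deriv_eval_def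
proof (rule subfield_sum[OF assms(1)])
  fix w assume "w \<in> {v. M v \<noteq> 0}"
  moreover have "{v. (M(w := M w - 1)) v \<noteq> 0} \<subseteq> {v. M v \<noteq> 0}" by auto
  ultimately have "mono_eval (M(w := M w - 1)) a \<in> F" "e w \<in> F"
    using assms(2,4) mono_eval_in[OF assms(1) _ assms(3)] by blast+
  then show "of_nat (M w) * mono_eval (M(w := M w - 1)) a * e w \<in> F"
    by (intro subfield_mult[OF assms(1)] subfield_of_nat[OF assms(1)])
qed

lemma lpoly_eval_in:
  assumes "is_subfield F" "K \<subseteq> F" "a ` U \<subseteq> F" "lpoly_over K U P"
  shows "lpoly_eval a P \<in> F"
  unfolding lpoly_eval_def
proof (rule subfield_sum_list[OF assms(1)], clarify)
  fix c M assume "(c, M) \<in> set P"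
  with assms(4) have "c \<in> K" "{v. M v \<noteq> 0} \<subseteq> U" by (auto dest: lpoly_overD)
  then show "c * mono_eval M a \<in> F"
    using assms(2) by (intro subfield_mult[OF assms(1)] mono_eval_in[OF assms(1) _ assms(3)]) auto
qed

lemma lpoly_deriv_eval_in:
  assumes "is_subfield F" "K \<subseteq> F" "a ` U \<subseteq> F" "e ` U \<subseteq> F" "\<forall>x\<in>K. dd x \<in> F"
    and "lpoly_over K U P"
  shows "lpoly_deriv_eval dd a e P \<in> F"
  unfolding lpoly_deriv_eval_def
proof (rule subfield_sum_list[OF assms(1)], clarify)
  fix c M assume "(c, M) \<in> set P"
  with assms(6) have "c \<in> K" "{v. M v \<noteq> 0} \<subseteq> U" by (auto dest: lpoly_overD)
  then show "dd c * mono_eval M a + c * mono_deriv_eval a e M \<in> F"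
    using assms(2,5)
    by (intro subfield_add[OF assms(1)] subfield_mult[OF assms(1)] mono_eval_in[OF assms(1) _ assms(3)]
        mono_deriv_eval_in[OF assms(1) _ assms(3,4)]) auto
qed

section \<open>Polynomial relations among the generators\<close>

definition lpoly_vars :: "'a lpoly \<Rightarrow> idx set" where
  "lpoly_vars P = (\<Union>(c, M)\<in>set P. {v. M v \<noteq> 0})"

lemma lpoly_over_vars:
  assumes "lpoly_over K U P"
  shows "finite (lpoly_vars P)" "lpoly_vars P \<subseteq> U" "lpoly_over K (lpoly_vars P) P"
  using assms unfolding lpoly_vars_def lpoly_over_def by auto

lemma lpoly_deriv_eval_constant:
  assumes dd: "is_derivation K L dd" and K: "is_subfield K" and "lpoly_over K U P"
    and "\<forall>(c, M)\<in>set P. M = (\<lambda>_. 0)"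
  shows "lpoly_eval a P \<in> K \<and> lpoly_deriv_eval dd a e P = dd (lpoly_eval a P)"
  using assms(3,4)
proof (induction P)
  case Nil then show ?case using derivation_0[OF dd K] subfield_0[OF K] by simp
next
  case (Cons t P)
  obtain c M where t: "t = (c, M)" by (cases t)
  with Cons.prems have "M = (\<lambda>_. 0)" "c \<in> K" "lpoly_over K U P" "\<forall>(c, M)\<in>set P. M = (\<lambda>_. 0)"
    by auto
  with Cons.IH t show ?case by (auto simp: derivation_add[OF dd] subfield_add[OF K])
qed

definition lpoly_coeffs :: "'a::field lpoly \<Rightarrow> monom \<Rightarrow> 'a" where
  "lpoly_coeffs P M = sum_list (map (\<lambda>(c, M'). if M' = M then c else 0) P)"

lemma lpoly_coeffs_support: "{M. lpoly_coeffs P M \<noteq> 0} \<subseteq> snd ` set P"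
proof
  fix M assume "M \<in> {M. lpoly_coeffs P M \<noteq> 0}"
  moreover have "lpoly_coeffs P M = 0" if "M \<notin> snd ` set P"
    unfolding lpoly_coeffs_def using that by (induction P) force+
  ultimately show "M \<in> snd ` set P" by blast
qed

lemma sum_collect_terms:
  fixes g :: "monom \<Rightarrow> 'b::comm_semiring_1" and h :: "'c \<Rightarrow> 'b"
  assumes "finite S" "snd ` set P \<subseteq> S"
  shows "(\<Sum>M\<in>S. sum_list (map (\<lambda>(c, M'). if M' = M then h c else 0) P) * g M)
       = sum_list (map (\<lambda>(c, M). h c * g M) P)"
  using assms(2)
proof (induction P)
  case (Cons t P)
  obtain c M0 where t: "t = (c, M0)" by (cases t)
  with Cons.prems have "M0 \<in> S" by auto
  have "(\<Sum>M\<in>S. (if M0 = M then h c else 0) * g M) = h c * g M0"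
    using \<open>M0 \<in> S\<close> assms(1) by (simp add: if_distrib[where f = "\<lambda>x. x * _"] cong: if_cong)
  with Cons t show ?case by (simp add: distrib_right sum.distrib)
qed simp

lemma sum_lpoly_coeffs:
  "(\<Sum>M\<in>{M. lpoly_coeffs P M \<noteq> 0}. lpoly_coeffs P M * g M) = sum_list (map (\<lambda>(c, M). c * g M) P)"
proof -
  have "(\<Sum>M\<in>{M. lpoly_coeffs P M \<noteq> 0}. lpoly_coeffs P M * g M) = (\<Sum>M\<in>snd ` set P. lpoly_coeffs P M * g M)"
    by (rule sum.mono_neutral_left) (use lpoly_coeffs_support in auto)
  also have "\<dots> = sum_list (map (\<lambda>(c, M). c * g M) P)"
    unfolding lpoly_coeffs_def using sum_collect_terms[of "snd ` set P" P "\<lambda>c. c"] by simp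
  finally show ?thesis .
qed

lemma mpoly_eval_lpoly_coeffs: "mpoly_eval (lpoly_coeffs P) a = lpoly_eval a P"
  unfolding mpoly_eval_def lpoly_eval_def by (rule sum_lpoly_coeffs)

lemma mpoly_over_lpoly_coeffs:
  assumes K: "is_subfield K" and P: "lpoly_over K W P"
  shows "mpoly_over K W (lpoly_coeffs P)"
  unfolding mpoly_over_def
proof (intro conjI allI impI)
  show "finite {M. lpoly_coeffs P M \<noteq> 0}" by (rule finite_subset[OF lpoly_coeffs_support]) simp
  show "lpoly_coeffs P M \<in> K" for M
    unfolding lpoly_coeffs_def
  proof (rule subfield_sum_list[OF K], clarify)
    fix c M' assume "(c, M') \<in> set P"
    then show "(if M' = M then c else 0) \<in> K" using lpoly_overD[OF P] subfield_0[OF K] by auto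
  qed
  fix M assume "lpoly_coeffs P M \<noteq> 0"
  then obtain c where "(c, M) \<in> set P" using lpoly_coeffs_support by force
  from lpoly_overD[OF P this] show "finite {v. M v \<noteq> 0}" "{v. M v \<noteq> 0} \<subseteq> W" by blast+
qed

lemma mpoly_coeff_deriv_eval_lpoly_coeffs:
  assumes dd: "is_derivation K L dd" and K: "is_subfield K" and P: "lpoly_over K U P"
  shows "mpoly_coeff_deriv_eval dd (lpoly_coeffs P) a = sum_list (map (\<lambda>(c, M). dd c * mono_eval M a) P)"
proof -
  have dd_coeffs: "dd (lpoly_coeffs P M) = sum_list (map (\<lambda>(c, M'). if M' = M then dd c else 0) P)" for M
    unfolding lpoly_coeffs_def
  proof (subst derivation_sum_list[OF dd K])
    fix t assume t: "t \<in> set P"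
    obtain c M' where "t = (c, M')" by (cases t)
    with t show "(case t of (c, M') \<Rightarrow> if M' = M then c else 0) \<in> K"
      using lpoly_overD[OF P, of c M'] subfield_0[OF K] by auto
  next
    show "sum_list (map (\<lambda>t. dd (case t of (c, M') \<Rightarrow> if M' = M then c else 0)) P)
        = sum_list (map (\<lambda>(c, M'). if M' = M then dd c else 0) P)"
      by (rule arg_cong[where f = sum_list], rule map_cong) (auto simp: derivation_0[OF dd K])
  qed
  have "mpoly_coeff_deriv_eval dd (lpoly_coeffs P) a = (\<Sum>M\<in>snd ` set P. dd (lpoly_coeffs P M) * mono_eval M a)"
    unfolding mpoly_coeff_deriv_eval_def
    by (rule sum.mono_neutral_left) (use lpoly_coeffs_support derivation_0[OF dd K] in auto)
  also have "\<dots> = sum_list (map (\<lambda>(c, M). dd c * mono_eval M a) P)"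
    unfolding dd_coeffs by (rule sum_collect_terms) auto
  finally show ?thesis .
qed

lemma mpoly_pderiv_sum_lpoly_coeffs:
  assumes "finite W" and P: "lpoly_over K W P"
  shows "(\<Sum>w\<in>W. mpoly_pderiv_eval (lpoly_coeffs P) w a * e w)
           = sum_list (map (\<lambda>(c, M). c * mono_deriv_eval a e M) P)"
proof -
  let ?f = "lpoly_coeffs P"
  have "(\<Sum>w\<in>W. mpoly_pderiv_eval ?f w a * e w)
      = (\<Sum>M\<in>{M. ?f M \<noteq> 0}. \<Sum>w\<in>W. ?f M * (of_nat (M w) * mono_eval (M(w := M w - 1)) a * e w))"
    unfolding mpoly_pderiv_eval_def sum_distrib_right by (subst sum.swap) (simp add: mult.assoc)
  also have "\<dots> = (\<Sum>M\<in>{M. ?f M \<noteq> 0}. ?f M * mono_deriv_eval a e M)"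
  proof (rule sum.cong[OF refl])
    fix M assume "M \<in> {M. ?f M \<noteq> 0}"
    then obtain c where "(c, M) \<in> set P" using lpoly_coeffs_support by force
    then have "{v. M v \<noteq> 0} \<subseteq> W" using lpoly_overD[OF P] by blast
    from mono_deriv_eval_superset[OF assms(1) this, of a e]
    show "(\<Sum>w\<in>W. ?f M * (of_nat (M w) * mono_eval (M(w := M w - 1)) a * e w)) = ?f M * mono_deriv_eval a e M"
      by (simp add: sum_distrib_left)
  qed
  also have "\<dots> = sum_list (map (\<lambda>(c, M). c * mono_deriv_eval a e M) P)"
    by (rule sum_lpoly_coeffs)
  finally show ?thesis .
qed

lemma lpoly_deriv_eval_split:
  "lpoly_deriv_eval dd a e P = sum_list (map (\<lambda>(c, M). dd c * mono_eval M a) P)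
     + sum_list (map (\<lambda>(c, M). c * mono_deriv_eval a e M) P)"
  by (induction P) auto

abbreviation deriv_domain :: "nat \<Rightarrow> nat \<Rightarrow> idx option \<Rightarrow> nat \<Rightarrow> idx set" where
  "deriv_domain m n b i \<equiv> {(\<xi>, h) \<in> indices m n. idx_lt_bnd m (add_eps \<xi> i, h) b}"

abbreviation shifted :: "(idx \<Rightarrow> 'a) \<Rightarrow> nat \<Rightarrow> idx \<Rightarrow> 'a" where
  "shifted a i \<equiv> \<lambda>w. a (add_eps (fst w) i, snd w)"

text \<open>The differential condition is applied at the largest variable occurring in the relation; a
  relation without variables is a constant of \<open>K\<close>, namely \<open>0\<close>.\<close>

lemma lpoly_deriv_eval_relation_eq_0:
  assumes m: "m > 0" and K: "is_subfield K" and dd: "is_derivation K K (d i)" and i: "i < m"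
    and dc: "differential_condition m n K d a b"
    and P: "lpoly_over K (deriv_domain m n b i) P" and rel: "lpoly_eval a P = 0"
  shows "lpoly_deriv_eval (d i) a (shifted a i) P = 0"
proof (cases "lpoly_vars P = {}")
  case True
  then have "\<forall>(c, M)\<in>set P. M = (\<lambda>_. 0)" by (fastforce simp: lpoly_vars_def)
  from lpoly_deriv_eval_constant[OF dd K P this] rel derivation_0[OF dd K] show ?thesis by simp
next
  case False
  note vars = lpoly_over_vars[OF P]
  obtain \<sigma> k where top: "(\<sigma>, k) \<in> lpoly_vars P" "\<forall>p\<in>lpoly_vars P. idx_le m p (\<sigma>, k)"
    using idx_max_exists[OF m vars(1) False] vars(2) by fastforce
  then have \<sigma>k: "(\<sigma>, k) \<in> indices m n" "idx_lt_bnd m (add_eps \<sigma> i, k) b" using vars(2) by auto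
  define W where "W = {p \<in> indices m n. idx_le m p (\<sigma>, k)}"
  have "lpoly_vars P \<subseteq> W" using top(2) vars(2) by (auto simp: W_def)
  with vars(3) have PW: "lpoly_over K W P" by (rule lpoly_over_mono[rotated])
  have "(\<Sum>(\<eta>, g)\<in>W. mpoly_pderiv_eval (lpoly_coeffs P) (\<eta>, g) a * a (add_eps \<eta> i, g))
          + mpoly_coeff_deriv_eval (d i) (lpoly_coeffs P) a = 0"
    using dc[unfolded differential_condition_def, rule_format, OF i] \<sigma>k
      mpoly_over_lpoly_coeffs[OF K PW] rel
    by (simp add: W_def mpoly_eval_lpoly_coeffs)
  moreover have "(\<Sum>(\<eta>, g)\<in>W. mpoly_pderiv_eval (lpoly_coeffs P) (\<eta>, g) a * a (add_eps \<eta> i, g))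
      = (\<Sum>w\<in>W. mpoly_pderiv_eval (lpoly_coeffs P) w a * shifted a i w)"
    by (rule sum.cong) auto
  ultimately show ?thesis
    using mpoly_pderiv_sum_lpoly_coeffs[OF finite_idx_le[of m n \<sigma> k, folded W_def] PW]
      mpoly_coeff_deriv_eval_lpoly_coeffs[OF dd K PW]
    by (simp add: lpoly_deriv_eval_split add.commute)
qed

section \<open>Extension of the derivations\<close>

definition quot_rule :: "'a::field \<Rightarrow> 'a \<Rightarrow> 'a \<Rightarrow> 'a \<Rightarrow> 'a" where
  "quot_rule p p' q q' = (p' * q - p * q') / q ^ 2"

lemma quot_rule_add:
  fixes p1 p1' q1 q1' p2 p2' q2 q2' :: "'a::field"
  assumes "q1 \<noteq> 0" "q2 \<noteq> 0"
  shows "quot_rule (p1 * q2 + p2 * q1) (p1 * q2' + p1' * q2 + (p2 * q1' + p2' * q1))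
           (q1 * q2) (q1 * q2' + q1' * q2)
         = quot_rule p1 p1' q1 q1' + quot_rule p2 p2' q2 q2'"
  using assms by (simp add: quot_rule_def field_simps power2_eq_square)

lemma quot_rule_mult:
  fixes p1 p1' q1 q1' p2 p2' q2 q2' :: "'a::field"
  assumes "q1 \<noteq> 0" "q2 \<noteq> 0"
  shows "quot_rule (p1 * p2) (p1 * p2' + p1' * p2) (q1 * q2) (q1 * q2' + q1' * q2)
         = p1 / q1 * quot_rule p2 p2' q2 q2' + quot_rule p1 p1' q1 q1' * (p2 / q2)"
  using assms by (simp add: quot_rule_def field_simps power2_eq_square)

lemma quot_rule_eq:
  fixes p1 p1' q1 q1' p2 p2' q2 q2' :: "'a::field"
  assumes "q1 \<noteq> 0" "q2 \<noteq> 0" "p1 / q1 = p2 / q2"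
    and "p1 * q2' + p1' * q2 - (p2 * q1' + p2' * q1) = 0"
  shows "quot_rule p1 p1' q1 q1' = quot_rule p2 p2' q2 q2'"
proof -
  define x where "x = p1 / q1"
  have p1: "p1 = x * q1" and p2: "p2 = x * q2" using assms(1-3) by (auto simp: x_def field_simps)
  have l: "quot_rule p1 p1' q1 q1' = (p1' - x * q1') / q1"
    using assms(1) by (simp add: quot_rule_def p1 field_simps power2_eq_square)
  have r: "quot_rule p2 p2' q2 q2' = (p2' - x * q2') / q2"
    using assms(2) by (simp add: quot_rule_def p2 field_simps power2_eq_square)
  have "(p1' - x * q1') * q2 = (p2' - x * q2') * q1"
    using assms(4) unfolding p1 p2 by (simp add: algebra_simps)
  then show ?thesis unfolding l r using assms(1,2) by (simp add: field_simps)
qed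

definition frac_rep ::
  "'a::field set \<Rightarrow> idx set \<Rightarrow> (idx \<Rightarrow> 'a) \<Rightarrow> 'a \<Rightarrow> 'a lpoly \<Rightarrow> 'a lpoly \<Rightarrow> bool" where
  "frac_rep K U a x P Q \<longleftrightarrow>
     lpoly_over K U P \<and> lpoly_over K U Q \<and> lpoly_eval a Q \<noteq> 0 \<and> x = lpoly_eval a P / lpoly_eval a Q"

definition quot_deriv ::
  "('a \<Rightarrow> 'a) \<Rightarrow> (idx \<Rightarrow> 'a::field) \<Rightarrow> (idx \<Rightarrow> 'a) \<Rightarrow> 'a lpoly \<Rightarrow> 'a lpoly \<Rightarrow> 'a" where
  "quot_deriv dd a e P Q =
     quot_rule (lpoly_eval a P) (lpoly_deriv_eval dd a e P) (lpoly_eval a Q) (lpoly_deriv_eval dd a e Q)"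

lemma frac_rep_const:
  "is_subfield K \<Longrightarrow> c \<in> K \<Longrightarrow> frac_rep K U a c (lpoly_const c) (lpoly_const 1)"
  by (simp add: frac_rep_def lpoly_over_const subfield_1)

lemma frac_rep_var:
  "is_subfield K \<Longrightarrow> v \<in> U \<Longrightarrow> frac_rep K U a (a v) (lpoly_var v) (lpoly_const 1)"
  by (simp add: frac_rep_def lpoly_over_const lpoly_over_var subfield_1)

lemma frac_rep_uminus:
  "is_subfield K \<Longrightarrow> frac_rep K U a x P Q \<Longrightarrow> frac_rep K U a (- x) (lpoly_uminus P) Q"
  by (simp add: frac_rep_def lpoly_over_uminus)

lemma frac_rep_inverse:
  assumes "frac_rep K U a x P Q" "x \<noteq> 0"
  shows "frac_rep K U a (inverse x) Q P"
  using assms by (auto simp: frac_rep_def)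

lemma frac_rep_add:
  assumes K: "is_subfield K" and "frac_rep K U a x P1 Q1" "frac_rep K U a y P2 Q2"
  shows "frac_rep K U a (x + y) (lpoly_mult P1 Q2 @ lpoly_mult P2 Q1) (lpoly_mult Q1 Q2)"
  using assms(2,3) by (simp add: frac_rep_def lpoly_over_mult[OF K] lpoly_eval_mult[of K U] add_frac_eq)

lemma frac_rep_mult:
  assumes K: "is_subfield K" and "frac_rep K U a x P1 Q1" "frac_rep K U a y P2 Q2"
  shows "frac_rep K U a (x * y) (lpoly_mult P1 P2) (lpoly_mult Q1 Q2)"
  using assms(2,3) by (simp add: frac_rep_def lpoly_over_mult[OF K] lpoly_eval_mult[of K U])

lemma frac_rep_exists:
  assumes K: "is_subfield K" and x: "x \<in> field_gen K (a ` U)"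
  shows "\<exists>P Q. frac_rep K U a x P Q"
proof -
  define R where "R = {x. \<exists>P Q. frac_rep K U a x P Q}"
  have "is_subfield R"
    unfolding is_subfield_def
  proof (intro conjI ballI)
    show "0 \<in> R" "1 \<in> R"
      unfolding R_def using frac_rep_const[OF K subfield_0[OF K]] frac_rep_const[OF K subfield_1[OF K]]
      by blast+
    fix x y assume "x \<in> R" "y \<in> R"
    then obtain P1 Q1 P2 Q2 where x: "frac_rep K U a x P1 Q1" and y: "frac_rep K U a y P2 Q2"
      unfolding R_def by blast
    show "x + y \<in> R" "x * y \<in> R"
      unfolding R_def using frac_rep_add[OF K x y] frac_rep_mult[OF K x y] by blast+
    show "x - y \<in> R"
      unfolding R_def using frac_rep_add[OF K x frac_rep_uminus[OF K y]] by fastforce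
  next
    fix x assume "x \<in> R"
    then obtain P Q where x: "frac_rep K U a x P Q" unfolding R_def by blast
    show "inverse x \<in> R"
    proof (cases "x = 0")
      case True
      then show ?thesis unfolding R_def using frac_rep_const[OF K subfield_0[OF K]] by auto
    next
      case False
      then show ?thesis unfolding R_def using frac_rep_inverse[OF x] by blast
    qed
  qed
  moreover have "K \<subseteq> R" "a ` U \<subseteq> R"
    unfolding R_def using frac_rep_const[OF K] frac_rep_var[OF K] by blast+
  ultimately show ?thesis using field_gen_least x unfolding R_def by blast
qed

lemma quot_deriv_add:
  assumes K: "is_subfield K" and dd: "is_derivation K L dd"
    and x: "frac_rep K U a x P1 Q1" and y: "frac_rep K U a y P2 Q2"
  shows "quot_deriv dd a e (lpoly_mult P1 Q2 @ lpoly_mult P2 Q1) (lpoly_mult Q1 Q2)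
           = quot_deriv dd a e P1 Q1 + quot_deriv dd a e P2 Q2"
  using x y
  by (simp add: frac_rep_def quot_deriv_def lpoly_eval_mult[of K U] lpoly_deriv_eval_mult[OF dd, of U]
      quot_rule_add)

lemma quot_deriv_mult:
  assumes K: "is_subfield K" and dd: "is_derivation K L dd"
    and x: "frac_rep K U a x P1 Q1" and y: "frac_rep K U a y P2 Q2"
  shows "quot_deriv dd a e (lpoly_mult P1 P2) (lpoly_mult Q1 Q2)
           = x * quot_deriv dd a e P2 Q2 + quot_deriv dd a e P1 Q1 * y"
  using x y
  by (simp add: frac_rep_def quot_deriv_def lpoly_eval_mult[of K U] lpoly_deriv_eval_mult[OF dd, of U]
      quot_rule_mult)

lemma quot_deriv_well_defined:
  assumes m: "m > 0" and K: "is_subfield K" and dd: "is_derivation K K (d i)" and i: "i < m"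
    and dc: "differential_condition m n K d a b"
    and x1: "frac_rep K (deriv_domain m n b i) a x P1 Q1"
    and x2: "frac_rep K (deriv_domain m n b i) a x P2 Q2"
  shows "quot_deriv (d i) a (shifted a i) P1 Q1 = quot_deriv (d i) a (shifted a i) P2 Q2"
proof -
  let ?V = "deriv_domain m n b i" and ?D = "lpoly_deriv_eval (d i) a (shifted a i)"
  define R where "R = lpoly_mult P1 Q2 @ lpoly_uminus (lpoly_mult P2 Q1)"
  note reps = x1[unfolded frac_rep_def] x2[unfolded frac_rep_def]
  have R: "lpoly_over K ?V R"
    unfolding R_def using reps by (simp add: lpoly_over_mult[OF K] lpoly_over_uminus[OF K])
  have "lpoly_eval a R = 0"
    unfolding R_def using reps by (simp add: lpoly_eval_mult[of K ?V] field_simps)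
  then have "?D R = 0" by (rule lpoly_deriv_eval_relation_eq_0[OF m K dd i dc R])
  moreover have "?D R = lpoly_eval a P1 * ?D Q2 + ?D P1 * lpoly_eval a Q2
      - (lpoly_eval a P2 * ?D Q1 + ?D P2 * lpoly_eval a Q1)"
    unfolding R_def using reps
    by (simp add: lpoly_deriv_eval_uminus[OF dd K lpoly_over_mult[OF K, of ?V P2 Q1]]
        lpoly_eval_mult[of K ?V] lpoly_deriv_eval_mult[OF dd, of ?V])
  ultimately show ?thesis
    unfolding quot_deriv_def using reps by (intro quot_rule_eq) auto
qed

lemma derivation_extension_exists:
  assumes m: "m > 0" and K: "is_subfield K" and dd: "is_derivation K K (d i)" and i: "i < m"
    and dc: "differential_condition m n K d a b"
  shows "\<exists>D. is_derivation (field_gen K (a ` deriv_domain m n b i)) (gen_below m n K a b) D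
          \<and> (\<forall>x\<in>K. D x = d i x)
          \<and> (\<forall>\<sigma> k. (\<sigma>, k) \<in> indices m n \<and> idx_lt_bnd m (add_eps \<sigma> i, k) b
                 \<longrightarrow> D (a (\<sigma>, k)) = a (add_eps \<sigma> i, k))"
proof -
  let ?V = "deriv_domain m n b i" and ?L = "gen_below m n K a b"
  define rep where "rep x = (SOME (P, Q). frac_rep K ?V a x P Q)" for x
  define D where "D x = quot_deriv (d i) a (shifted a i) (fst (rep x)) (snd (rep x))" for x
  have D_rep: "D x = quot_deriv (d i) a (shifted a i) P Q" if "frac_rep K ?V a x P Q" for x P Q
  proof -
    have "case rep x of (P', Q') \<Rightarrow> frac_rep K ?V a x P' Q'"
      unfolding rep_def by (rule someI[of _ "(P, Q)"]) (simp add: that)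
    then have "frac_rep K ?V a x (fst (rep x)) (snd (rep x))" by (simp add: split_beta)
    from quot_deriv_well_defined[OF m K dd i dc this that] show ?thesis unfolding D_def .
  qed
  have L: "is_subfield ?L" unfolding gen_below_def by (rule field_gen_subfield)
  have KL: "K \<subseteq> ?L" unfolding gen_below_def by (rule field_gen_base)
  have gen_L: "a (\<xi>, h) \<in> ?L" if "(\<xi>, h) \<in> indices m n" "idx_lt_bnd m (\<xi>, h) b" for \<xi> h
    unfolding gen_below_def by (rule subsetD[OF field_gen_gens]) (use that in auto)
  have aV: "a ` ?V \<subseteq> ?L"
  proof clarify
    fix \<xi> h assume "(\<xi>, h) \<in> indices m n" "idx_lt_bnd m (add_eps \<xi> i, h) b"
    then show "a (\<xi>, h) \<in> ?L" using gen_L idx_lt_bnd_trans[OF idx_lt_add_eps[OF i]] by blast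
  qed
  have eV: "shifted a i ` ?V \<subseteq> ?L"
  proof clarify
    fix \<xi> h assume "(\<xi>, h) \<in> indices m n" "idx_lt_bnd m (add_eps \<xi> i, h) b"
    then show "shifted a i (\<xi>, h) \<in> ?L" by (simp add: gen_L add_eps_in_indices[OF i])
  qed
  have "\<forall>x\<in>K. d i x \<in> K" using dd by (simp add: is_derivation_def)
  with KL have dK: "\<forall>x\<in>K. d i x \<in> ?L" by blast
  have "is_derivation (field_gen K (a ` ?V)) ?L D"
    unfolding is_derivation_def
  proof (intro conjI ballI)
    fix x assume "x \<in> field_gen K (a ` ?V)"
    then obtain P Q where x: "frac_rep K ?V a x P Q" using frac_rep_exists[OF K] by blast
    then have "lpoly_eval a P \<in> ?L" "lpoly_eval a Q \<in> ?L"
      "lpoly_deriv_eval (d i) a (shifted a i) P \<in> ?L" "lpoly_deriv_eval (d i) a (shifted a i) Q \<in> ?L"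
      unfolding frac_rep_def
      using lpoly_eval_in[OF L KL aV] lpoly_deriv_eval_in[OF L KL aV eV dK] by blast+
    then show "D x \<in> ?L"
      unfolding D_rep[OF x] quot_deriv_def quot_rule_def
      by (intro subfield_divide[OF L] subfield_diff[OF L] subfield_mult[OF L] subfield_power[OF L])
  next
    fix x y assume "x \<in> field_gen K (a ` ?V)" "y \<in> field_gen K (a ` ?V)"
    then obtain P1 Q1 P2 Q2 where x: "frac_rep K ?V a x P1 Q1" and y: "frac_rep K ?V a y P2 Q2"
      using frac_rep_exists[OF K] by meson
    show "D (x + y) = D x + D y"
      unfolding D_rep[OF frac_rep_add[OF K x y]] D_rep[OF x] D_rep[OF y]
      by (rule quot_deriv_add[OF K dd x y])
    show "D (x * y) = x * D y + D x * y"
      unfolding D_rep[OF frac_rep_mult[OF K x y]] D_rep[OF x] D_rep[OF y]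
      by (rule quot_deriv_mult[OF K dd x y])
  qed
  moreover have "D x = d i x" if "x \<in> K" for x
    using D_rep[OF frac_rep_const[OF K that]] derivation_1[OF dd K]
    by (simp add: quot_deriv_def quot_rule_def)
  moreover have "D (a (\<sigma>, k)) = a (add_eps \<sigma> i, k)"
    if "(\<sigma>, k) \<in> indices m n" "idx_lt_bnd m (add_eps \<sigma> i, k) b" for \<sigma> k
    using D_rep[OF frac_rep_var[OF K, of "(\<sigma>, k)"]] that derivation_1[OF dd K]
    by (simp add: quot_deriv_def quot_rule_def lpoly_deriv_eval_var[OF dd K])
  ultimately show ?thesis by (intro exI[of _ D]) blast
qed

section \<open>Separable leaders\<close>

lemma poly_over_pCons: "poly_over F (pCons c q) \<Longrightarrow> c \<in> F \<and> poly_over F q"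
  unfolding poly_over_def by (metis coeff_pCons_0 coeff_pCons_Suc)

lemma poly_over_mono: "F \<subseteq> G \<Longrightarrow> poly_over F q \<Longrightarrow> poly_over G q"
  unfolding poly_over_def by blast

lemma poly_over_pderiv:
  assumes F: "is_subfield F" and q: "poly_over F q"
  shows "poly_over F (pderiv q)"
  unfolding poly_over_def coeff_pderiv
proof
  fix j
  have "coeff q (Suc j) \<in> F" using q unfolding poly_over_def by blast
  then show "of_nat (Suc j) * coeff q (Suc j) \<in> F" by (rule subfield_mult[OF F subfield_of_nat[OF F]])
qed

lemma poly_in_subfield:
  assumes G: "is_subfield G" and "poly_over G q" "x \<in> G"
  shows "poly q x \<in> G"
  using assms(2)
proof (induction q)
  case 0 then show ?case by (simp add: subfield_0[OF G])
next
  case (pCons c q)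
  with poly_over_pCons[OF pCons.prems] show ?case
    by (simp add: subfield_add[OF G] subfield_mult[OF G] \<open>x \<in> G\<close>)
qed

lemma separable_poly_pderiv_nonzero:
  fixes p :: "'a::field poly"
  assumes "separable_poly p" "poly p x = 0"
  shows "poly (pderiv p) x \<noteq> 0"
proof
  assume "poly (pderiv p) x = 0"
  then have "[:- x, 1:] dvd pderiv p" by (simp add: poly_eq_0_iff_dvd)
  moreover have "[:- x, 1:] dvd p" using assms(2) by (simp add: poly_eq_0_iff_dvd)
  ultimately have "is_unit [:- x, 1:]"
    using coprime_common_divisor[OF assms(1)[unfolded separable_poly_def]] by blast
  then show False by (simp add: is_unit_iff_degree)
qed

text \<open>\<open>D(p(x)) = p\<^sup>D(x) + p'(x) D x\<close>, where \<open>p\<^sup>D(x)\<close> is only known to lie in a subfield \<open>G\<close>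
  into which \<open>D\<close> maps the coefficients of \<open>p\<close>.\<close>

lemma derivation_poly:
  assumes D: "is_derivation E L D" and E: "is_subfield E" and G: "is_subfield G"
    and "F \<subseteq> E" "x \<in> E" "x \<in> G" "\<forall>c\<in>F. D c \<in> G" and "poly_over F q"
  shows "poly q x \<in> E \<and> (\<exists>T\<in>G. D (poly q x) = T + poly (pderiv q) x * D x)"
  using assms(8)
proof (induction q)
  case 0
  then show ?case using derivation_0[OF D E] subfield_0[OF E] subfield_0[OF G] by auto
next
  case (pCons c q)
  from poly_over_pCons[OF pCons.prems] have c: "c \<in> F" and q: "poly_over F q" by auto
  from pCons.IH[OF q] obtain T where qE: "poly q x \<in> E" and T: "T \<in> G"
    and DT: "D (poly q x) = T + poly (pderiv q) x * D x" by blast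
  have cE: "c \<in> E" using c assms(4) by blast
  have xq: "x * poly q x \<in> E" by (rule subfield_mult[OF E \<open>x \<in> E\<close> qE])
  have "D (poly (pCons c q) x) = D c + (x * D (poly q x) + D x * poly q x)"
    using derivation_add[OF D cE xq] derivation_mult[OF D \<open>x \<in> E\<close> qE] by simp
  also have "\<dots> = (D c + x * T) + poly (pderiv (pCons c q)) x * D x"
    by (simp add: DT pderiv_pCons algebra_simps)
  finally have "D (poly (pCons c q) x) = (D c + x * T) + poly (pderiv (pCons c q)) x * D x" .
  moreover have "D c + x * T \<in> G"
    using assms(6,7) c T by (intro subfield_add[OF G] subfield_mult[OF G]) auto
  moreover have "poly (pCons c q) x \<in> E" using cE xq by (simp add: subfield_add[OF E])
  ultimately show ?case by blast
qed

lemma derivation_separable_element_in: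
  assumes D: "is_derivation E L D" and E: "is_subfield E" and F: "is_subfield F" and G: "is_subfield G"
    and FE: "F \<subseteq> E" and FG: "F \<subseteq> G" and x: "x \<in> E" "x \<in> G" and DF: "\<forall>c\<in>F. D c \<in> G"
    and sep: "separably_algebraic_over F x"
  shows "D x \<in> G"
proof -
  from sep obtain p where "is_min_poly F x p" and sp: "separable_poly p"
    unfolding separably_algebraic_over_def by blast
  then have p: "poly_over F p" and root: "poly p x = 0" unfolding is_min_poly_def by auto
  from derivation_poly[OF D E G FE x DF p]
  obtain T where T: "T \<in> G" and DT: "D (poly p x) = T + poly (pderiv p) x * D x" by blast
  with root derivation_0[OF D E] have "T + poly (pderiv p) x * D x = 0" by simp
  moreover have "poly (pderiv p) x \<noteq> 0" by (rule separable_poly_pderiv_nonzero[OF sp root])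
  ultimately have "D x = - T / poly (pderiv p) x" by (simp add: field_simps eq_neg_iff_add_eq_0)
  moreover have "poly (pderiv p) x \<in> G"
    by (rule poly_in_subfield[OF G poly_over_mono[OF FG poly_over_pderiv[OF F p]] x(2)])
  ultimately show ?thesis using T by (simp add: subfield_divide[OF G] subfield_uminus[OF G])
qed

lemma separably_algebraic_over_member:
  assumes G: "is_subfield G" and y: "y \<in> G"
  shows "separably_algebraic_over G y"
  unfolding separably_algebraic_over_def
proof (intro exI conjI)
  show "is_min_poly G y [:- y, 1:]"
    unfolding is_min_poly_def
  proof (intro conjI allI impI)
    show "poly_over G [:- y, 1:]"
      unfolding poly_over_def
    proof
      fix j show "coeff [:- y, 1:] j \<in> G"
        by (cases j; cases "j - 1") (auto simp: subfield_uminus[OF G y] subfield_1[OF G] subfield_0[OF G])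
    qed
    fix q assume q: "q \<noteq> 0 \<and> poly_over G q \<and> poly q y = 0"
    show "degree [:- y, 1:] \<le> degree q"
    proof (rule ccontr)
      assume "\<not> ?thesis"
      then have "degree q = 0" by simp
      then obtain c where "q = [:c:]" by (rule degree_eq_zeroE)
      with q have "c \<noteq> 0" "poly [:c:] y = 0" by auto
      then show False by simp
    qed
  qed simp_all
  have "pderiv [:- y, 1:] = 1" by (simp add: pderiv_pCons one_pCons)
  then show "separable_poly [:- y, 1:]" unfolding separable_poly_def by simp
qed

lemma gen_below_Some: "gen_below m n K a (Some q) = field_gen K (a ` {p \<in> indices m n. idx_lt m p q})"
  by (simp add: gen_below_def idx_lt_bnd_def)

lemma separable_leader_add_eps:
  assumes m: "m > 0" and K: "is_subfield K" and dd: "is_derivation K K (d i)" and i: "i < m"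
    and dc: "differential_condition m n K d a b"
    and \<sigma>k: "(\<sigma>, k) \<in> indices m n" and leader: "separable_leader m n K a (\<sigma>, k)"
    and bnd: "idx_lt_bnd m (add_eps \<sigma> i, k) b"
  shows "a (add_eps \<sigma> i, k) \<in> gen_below m n K a (Some (add_eps \<sigma> i, k))
     \<and> separable_leader m n K a (add_eps \<sigma> i, k)"
proof -
  let ?U = "{p \<in> indices m n. idx_lt m p (\<sigma>, k)}"
  let ?W = "{p \<in> indices m n. idx_lt m p (add_eps \<sigma> i, k)}"
  let ?E = "field_gen K (a ` deriv_domain m n b i)"
  let ?F = "field_gen K (a ` ?U)" and ?G = "field_gen K (a ` ?W)"
  from derivation_extension_exists[OF m K dd i dc] obtain D where
    D: "is_derivation ?E (gen_below m n K a b) D" and DK: "\<forall>x\<in>K. D x = d i x" and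
    Da: "\<forall>\<sigma> k. (\<sigma>, k) \<in> indices m n \<and> idx_lt_bnd m (add_eps \<sigma> i, k) b
                 \<longrightarrow> D (a (\<sigma>, k)) = a (add_eps \<sigma> i, k)"
    by blast
  have shift_W: "(add_eps \<xi> i, h) \<in> ?W" if "(\<xi>, h) \<in> ?U" for \<xi> h
    using that add_eps_in_indices[OF i] idx_lt_add_eps_mono[OF i] by simp
  have UV: "?U \<subseteq> deriv_domain m n b i"
  proof clarify
    fix \<xi> h assume "(\<xi>, h) \<in> indices m n" "idx_lt m (\<xi>, h) (\<sigma>, k)"
    then show "idx_lt_bnd m (add_eps \<xi> i, h) b"
      using idx_lt_bnd_trans[OF idx_lt_add_eps_mono[OF i] bnd] by blast
  qed
  have UW: "?U \<subseteq> ?W" using idx_lt_trans[OF _ idx_lt_add_eps[OF i]] by blast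
  have G: "is_subfield ?G" and E: "is_subfield ?E" and F: "is_subfield ?F"
    by (rule field_gen_subfield)+
  have FE: "?F \<subseteq> ?E" and FG: "?F \<subseteq> ?G" using UV UW by (simp_all add: field_gen_mono image_mono)
  have KG: "K \<subseteq> ?G" and aW: "a ` ?W \<subseteq> ?G" by (rule field_gen_base, rule field_gen_gens)
  have "\<forall>x\<in>K. d i x \<in> K" using dd by (simp add: is_derivation_def)
  then have DK_G: "\<forall>x\<in>K. D x \<in> ?G" using DK KG by auto
  have Da_G: "\<forall>x\<in>a ` ?U. D x \<in> ?G"
  proof clarify
    fix \<xi> h assume "(\<xi>, h) \<in> indices m n" "idx_lt m (\<xi>, h) (\<sigma>, k)"
    then have "(\<xi>, h) \<in> deriv_domain m n b i" "(add_eps \<xi> i, h) \<in> ?W"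
      using UV shift_W by auto
    then show "D (a (\<xi>, h)) \<in> ?G" using Da aW by auto
  qed
  have "a ` ?U \<subseteq> ?G" using UW aW by (meson image_mono subset_trans)
  from derivation_field_gen_into[OF D E G FE KG this DK_G Da_G]
  have DF: "\<forall>c\<in>?F. D c \<in> ?G" .
  have "(\<sigma>, k) \<in> deriv_domain m n b i" using \<sigma>k bnd by simp
  then have xE: "a (\<sigma>, k) \<in> ?E" using field_gen_gens[of "a ` deriv_domain m n b i" K] by blast
  have "(\<sigma>, k) \<in> ?W" using \<sigma>k idx_lt_add_eps[OF i] by simp
  then have xG: "a (\<sigma>, k) \<in> ?G" using aW by blast
  have "separably_algebraic_over ?F (a (\<sigma>, k))"
    using leader by (simp add: separable_leader_def gen_below_Some)
  from derivation_separable_element_in[OF D E F G FE FG xE xG DF this]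
  have "a (add_eps \<sigma> i, k) \<in> ?G" using Da \<sigma>k bnd by simp
  then show ?thesis
    by (simp add: separable_leader_def gen_below_Some separably_algebraic_over_member[OF G])
qed

lemma separable_leader_above:
  assumes m: "m > 0" and K: "is_subfield K" and dd: "\<forall>i<m. is_derivation K K (d i)"
    and dc: "differential_condition m n K d a b"
    and \<sigma>k: "(\<sigma>, k) \<in> indices m n" and leader: "separable_leader m n K a (\<sigma>, k)"
  shows "(\<rho>, k) \<in> indices m n \<Longrightarrow> idx_lt_bnd m (\<rho>, k) b \<Longrightarrow> \<sigma> \<le> \<rho>
     \<Longrightarrow> separable_leader m n K a (\<rho>, k)"
proof (induction "\<Sum>j<m. \<rho> j - \<sigma> j" arbitrary: \<rho> rule: less_induct)
  case less
  show ?case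
  proof (cases "\<rho> = \<sigma>")
    case True then show ?thesis using leader by simp
  next
    case False
    then obtain j where "\<rho> j \<noteq> \<sigma> j" by auto
    moreover have "\<forall>l\<ge>m. \<sigma> l = 0" "\<forall>l\<ge>m. \<rho> l = 0"
      using \<sigma>k less.prems(1) by (simp_all add: indices_def)
    ultimately have j: "j < m" by (metis not_le)
    have "\<sigma> j < \<rho> j" using \<open>\<rho> j \<noteq> \<sigma> j\<close> less.prems(3) by (simp add: le_fun_def le_neq_implies_less)
    define \<rho>' where "\<rho>' = \<rho>(j := \<rho> j - 1)"
    have \<rho>: "add_eps \<rho>' j = \<rho>"
      using \<open>\<sigma> j < \<rho> j\<close> by (auto simp: add_eps_def \<rho>'_def)
    have \<rho>'k: "(\<rho>', k) \<in> indices m n" using less.prems(1) j by (auto simp: indices_def \<rho>'_def)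
    have "\<sigma> \<le> \<rho>'" using less.prems(3) \<open>\<sigma> j < \<rho> j\<close> by (auto simp: le_fun_def \<rho>'_def)
    moreover have "idx_lt_bnd m (\<rho>', k) b"
      using idx_lt_bnd_trans[OF idx_lt_add_eps[OF j] less.prems(2)[folded \<rho>]] .
    moreover have "(\<Sum>l<m. \<rho>' l - \<sigma> l) < (\<Sum>l<m. \<rho> l - \<sigma> l)"
      using j \<open>\<sigma> j < \<rho> j\<close>
      by (intro sum_strict_mono_ex1) (auto simp: \<rho>'_def diff_le_mono intro!: bexI[of _ j])
    ultimately have "separable_leader m n K a (\<rho>', k)" using less.hyps \<rho>'k by blast
    from separable_leader_add_eps[OF m K dd[rule_format, OF j] j dc \<rho>'k this]
    show ?thesis using less.prems(2) \<rho> by simp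
  qed
qed

theorem lemma4p1:
  fixes m n :: nat and K :: "'a::field set" and d :: "nat \<Rightarrow> 'a \<Rightarrow> 'a"
    and a :: "idx \<Rightarrow> 'a" and b :: "idx option"
  assumes "m > 0" and "n > 0"
    and "is_subfield K"
    and "\<forall>i<m. is_derivation K K (d i)"
    and "\<forall>i<m. \<forall>j<m. \<forall>x\<in>K. d i (d j x) = d j (d i x)"
    and "\<forall>q. b = Some q \<longrightarrow> q \<in> indices m n"
    and "differential_condition m n K d a b"
  defines "L \<equiv> gen_below m n K a b"
  shows "(\<forall>i<m. \<exists>D.
            is_derivation (field_gen K (a ` {(\<xi>, h) \<in> indices m n. idx_lt_bnd m (add_eps \<xi> i, h) b})) L D
          \<and> (\<forall>x\<in>K. D x = d i x)
          \<and> (\<forall>\<sigma> k. (\<sigma>, k) \<in> indices m n \<and> idx_lt_bnd m (add_eps \<sigma> i, k) b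
                 \<longrightarrow> D (a (\<sigma>, k)) = a (add_eps \<sigma> i, k)))
   \<and> (\<forall>i<m. \<forall>\<sigma> k. (\<sigma>, k) \<in> indices m n \<and> separable_leader m n K a (\<sigma>, k)
          \<and> idx_lt_bnd m (add_eps \<sigma> i, k) b
          \<longrightarrow> a (add_eps \<sigma> i, k) \<in> gen_below m n K a (Some (add_eps \<sigma> i, k))
            \<and> separable_leader m n K a (add_eps \<sigma> i, k))
   \<and> (\<forall>\<sigma> \<rho> k. (\<sigma>, k) \<in> indices m n \<and> (\<rho>, k) \<in> indices m n \<and> idx_lt_bnd m (\<rho>, k) b
          \<and> \<sigma> \<le> \<rho> \<and> separable_leader m n K a (\<sigma>, k)
          \<longrightarrow> separable_leader m n K a (\<rho>, k))"
proof -
  \<comment> \<open>Each \<open>D\<^sub>i\<close> is built separately.\<close>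
  have dd: "is_derivation K K (d i)" if "i < m" for i using assms(4) that by blast
  show ?thesis
    unfolding L_def
    using derivation_extension_exists[OF assms(1,3) dd _ assms(7)]
      separable_leader_add_eps[OF assms(1,3) dd _ assms(7)]
      separable_leader_above[OF assms(1,3,4,7)]
    by blast
qed

end
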